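(* Let $f:\mathbb R^p\to\mathbb R^p$ be a continuous function of the form $f(x)=\sum_{\ell=1}^L\mathbf 1\{x\in\mathscr X^{(\ell)}\}(\phi^{(\ell)}+\Phi^{(\ell)}x)$, where $\{\mathscr X^{(\ell)}\}_{\ell=1}^L$ is a partition of $\mathbb R^p$ into convex sets, $\phi^{(\ell)}\in\mathbb R^p$ and $\Phi^{(\ell)}\in\mathbb R^{p\times p}$. Then: (1) for every $x',x''\in\mathbb R^p$ there exists $\Phi\in\operatorname{co}\{\Phi^{(\ell)}\}_{\ell=1}^L$ such that $f(x'')-f(x')=\Phi(x''-x')$; (2) if $f$ is invertible, then the sets $\mathscr Y^{(\ell)}\defeq f(\mathscr X^{(\ell)})$ partition $\mathbb R^p$ and $f^{-1}(y)=\sum_{\ell=1}^L\mathbf 1\{y\in\mathscr Y^{(\ell)}\}(\Phi^{(\ell)})^{-1}(y-\phi^{(\ell)})$. Suppose further that there exist $a\in\mathbb R^p\setminus\{0\}$ and thresholds $-\infty=\tau_0<\tau_1<\dots<\tau_L=+\infty$ with $\mathscr X^{(\ell)}=\{x\in\mathbb R^p:a^\top x\in(\tau_{\ell-1},\tau_\ell]\}$. Then: (3) if $f$ is invertible, $f^{-1}(y)=\sum_{\ell=1}^L\mathbf 1\{b^\top y\in(\nu_{\ell-1},\nu_\ell]\}(\Phi^{(\ell)})^{-1}(y-\phi^{(\ell)})$, where $b^\top\defeq a^\top(\Phi^{(1)})^{-1}$ and $\nu_\ell\defeq\frac{\det\Phi^{(\ell)}}{\det\Phi^{(1)}}\tau_\ell+a^\top(\Phi^{(1)})^{-1}\phi^{(\ell)}$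 for $\ell\in\{0,\dots,L\}$.
   Context: $\operatorname{co}$ denotes the convex hull. In parts (2)–(3), the formulas involve $(\Phi^{(\ell)})^{-1}$; the conventions $\pm\infty$ times positive scalars plus finite constants are $\pm\infty$. *)

theory Defs
  imports "HOL-Analysis.Analysis" "HOL-Library.Extended_Real"
begin

definition pw_affine ::
  "nat \<Rightarrow> (nat \<Rightarrow> (real^'p) set) \<Rightarrow> (nat \<Rightarrow> real^'p) \<Rightarrow> (nat \<Rightarrow> real^'p^'p) \<Rightarrow> real^'p \<Rightarrow> real^'p"
  where "pw_affine L X \<phi> \<Phi> x = (\<Sum>l\<in>{1..L}. of_bool (x \<in> X l) *\<^sub>R (\<phi> l + \<Phi> l *v x))"

text \<open>For l = 0 the matrix Phi^(0) does not exist; by the stated convention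
  (-infinity times a positive scalar plus a finite constant), nu_0 = -infinity.\<close>
definition nu_thr ::
  "(real^'p) \<Rightarrow> (nat \<Rightarrow> ereal) \<Rightarrow> (nat \<Rightarrow> real^'p) \<Rightarrow> (nat \<Rightarrow> real^'p^'p) \<Rightarrow> nat \<Rightarrow> ereal"
  where "nu_thr a \<tau> \<phi> \<Phi> l =
    (if l = 0 then - \<infinity>
     else ereal (det (\<Phi> l) / det (\<Phi> 1)) * \<tau> l
          + ereal ((a v* matrix_inv (\<Phi> 1)) \<bullet> \<phi> l))"

end

theory Submission
  imports Defs
begin

(* (1) Along the segment from x' to x'', the map t \<mapsto> f (x' + t (x'' - x')) is continuous and
  affine with slope \<Phi> l (x'' - x') on each of the finitely many intervals in which the segment
  meets X l. The fundamental theorem of calculus writes the increment of f as the average of these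
  slopes weighted by the lengths of the intervals, i.e. as a convex combination of the \<Phi> l
  applied to x'' - x'.
  (2) For a bijection, the images f ` X l partition the space and on f ` X l the inverse of f is
  the inverse of the affine map of piece l.
  (3) For slabs, continuity across the hyperplane a \<bullet> x = \<tau> l forces \<Phi> (l + 1) - \<Phi> l to be
  a rank-one matrix c a^T, so by the matrix determinant lemma b^T \<Phi> l = (det \<Phi> l / det \<Phi> 1) a^T.
  Injectivity across each hyperplane forces consecutive determinants to have the same sign, so
  b \<bullet> f x is a strictly increasing affine function of a \<bullet> x on every slab; by continuity
  these functions match up and map the slab (\<tau> (l - 1), \<tau> l] onto (\<nu> (l - 1), \<nu> l]. *)

section \<open>Rank-one updates of matrices\<close>

lemma matrix_inv_mult_vector:
  assumes "invertible (A :: real^'n^'n)"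
  shows "matrix_inv A *v (A *v x) = x" and "A *v (matrix_inv A *v x) = x"
proof -
  have "A ** matrix_inv A = mat 1" "matrix_inv A ** A = mat 1"
    using someI_ex[OF assms[unfolded invertible_def]] unfolding matrix_inv_def by auto
  then show "matrix_inv A *v (A *v x) = x" "A *v (matrix_inv A *v x) = x"
    by (simp_all add: matrix_vector_mul_assoc)
qed

lemma matrix_add_rdistrib: "(A + B) ** C = A ** C + B ** C"
  by (vector matrix_matrix_mult_def sum.distrib[symmetric] field_simps)

lemma sum_matrix_vector_mult: "(\<Sum>l\<in>I. A l) *v x = (\<Sum>l\<in>I. A l *v x)"
  by (induction I rule: infinite_finite_induct) (simp_all add: matrix_vector_mult_add_rdistrib)

definition outer :: "real^'m \<Rightarrow> real^'n \<Rightarrow> real^'n^'m"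
  where "outer u v = (\<chi> i j. u$i * v$j)"

lemma outer_mult_vector [simp]: "outer u v *v z = (v \<bullet> z) *\<^sub>R u"
  by (simp add: outer_def vec_eq_iff matrix_vector_mult_def inner_vec_def sum_distrib_left mult_ac)

lemma matrix_mul_outer: "A ** outer u v = outer (A *v u) v"
  by (simp add: outer_def vec_eq_iff matrix_matrix_mult_def matrix_vector_mult_def sum_distrib_left mult_ac)

lemma outer_mul_matrix: "outer u v ** B = outer u (v v* B)"
  by (simp add: outer_def vec_eq_iff matrix_matrix_mult_def vector_matrix_mult_def sum_distrib_left mult_ac)

lemma outer_add_left: "outer (u + w) v = outer u v + outer w v"
  by (simp add: outer_def vec_eq_iff distrib_right)

lemma outer_zero_left [simp]: "outer 0 v = 0"
  by (simp add: outer_def vec_eq_iff)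

lemma outer_zero_right [simp]: "outer u 0 = 0"
  by (simp add: outer_def vec_eq_iff)

lemma det_identity_plus_outer_axis:
  fixes u :: "real^'n"
  shows "det (mat 1 + outer u (axis k 1)) = 1 + u$k"
proof -
  have "mat 1 + outer u (axis k 1) =
      (\<chi> i j. if j = k then (axis k 1 + u)$i else (mat 1 :: real^'n^'n)$i$j)"
    by (simp add: vec_eq_iff outer_def mat_def axis_def)
  then show ?thesis
    using cramer_lemma[of k "mat 1" "axis k 1 + u"] by (simp only: matrix_vector_mul_lid det_I) simp
qed

text \<open>Conjugating by the matrix whose k-th row is a (where a$k \<noteq> 0) and whose other rows are
  those of the identity moves the rank-one part into the k-th column.\<close>
lemma det_identity_plus_outer:
  fixes w a :: "real^'n"
  shows "det (mat 1 + outer w a) = 1 + a \<bullet> w"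
proof (cases "a = 0")
  case False
  then obtain k where ak: "a$k \<noteq> 0" by (metis vec_eq_iff zero_index)
  define S :: "real^'n^'n" where "S = (\<chi> i. if i = k then a else axis i 1)"
  have "transpose S = (\<chi> i j. if j = k then a$i else (mat 1 :: real^'n^'n)$i$j)"
    by (simp add: vec_eq_iff S_def transpose_def mat_def axis_def)
  then have det_S: "det S = a$k"
    using cramer_lemma[of k "mat 1" a] det_transpose[of S]
    by (simp only: matrix_vector_mul_lid det_I)
  have "axis k 1 v* S = a"
    by (simp add: vec_eq_iff S_def vector_matrix_mult_def axis_def mult_if_delta)
  then have "S ** (mat 1 + outer w a) = (mat 1 + outer (S *v w) (axis k 1)) ** S"
    by (simp add: matrix_add_ldistrib matrix_add_rdistrib matrix_mul_outer outer_mul_matrix)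
  then have "det S * det (mat 1 + outer w a) = det S * (1 + (S *v w)$k)"
    by (metis det_mul det_identity_plus_outer_axis mult.commute)
  moreover have "(S *v w)$k = a \<bullet> w"
    by (simp add: S_def matrix_vector_mult_def inner_vec_def)
  ultimately show ?thesis using ak det_S by simp
qed simp

lemma add_outer_eq_mult:
  fixes A :: "real^'n^'n"
  assumes "invertible A"
  shows "A + outer c a = A ** (mat 1 + outer (matrix_inv A *v c) a)"
  by (simp add: matrix_add_ldistrib matrix_mul_outer matrix_inv_mult_vector[OF assms])

lemma det_add_outer:
  fixes A :: "real^'n^'n"
  assumes "invertible A"
  shows "det (A + outer c a) = det A * (1 + a \<bullet> (matrix_inv A *v c))"
  by (simp add: add_outer_eq_mult[OF assms] det_mul det_identity_plus_outer)

lemma inner_matrix_inv_add_outer: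
  fixes A :: "real^'n^'n"
  assumes "invertible A"
  shows "a \<bullet> (matrix_inv A *v ((A + outer c a) *v z)) = (1 + a \<bullet> (matrix_inv A *v c)) * (a \<bullet> z)"
  by (simp add: matrix_vector_mult_add_rdistrib matrix_vector_right_distrib matrix_inv_mult_vector[OF assms]
      matrix_vector_mult_scaleR inner_add_right distrib_right)

section \<open>Mean value property of continuous piecewise affine maps\<close>

lemma sum_of_bool_scaleR_single:
  fixes v :: "'i \<Rightarrow> 'a::real_vector"
  assumes "finite I" "l \<in> I" "P l" "\<And>k. k \<in> I \<Longrightarrow> k \<noteq> l \<Longrightarrow> \<not> P k"
  shows "(\<Sum>k\<in>I. of_bool (P k) *\<^sub>R v k) = v l"
proof -
  have "(\<Sum>k\<in>I. of_bool (P k) *\<^sub>R v k) = (\<Sum>k\<in>I. if k = l then v l else 0)"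
    by (rule sum.cong) (use assms in auto)
  then show ?thesis using assms(1,2) by simp
qed

lemma is_interval_line_preimage:
  assumes "convex X"
  shows "is_interval {t::real. x + t *\<^sub>R d \<in> X}"
proof -
  have "{t::real. x + t *\<^sub>R d \<in> X} = (\<lambda>t. t *\<^sub>R d) -` ((+) (- x) ` X)"
    by (force simp: algebra_simps)
  also have "convex \<dots>"
    by (intro convex_linear_vimage convex_translation assms) (simp add: linear_scaleR_left)
  finally show ?thesis by (simp add: is_interval_convex_1)
qed

lemma interval_mem_interior:
  fixes U :: "real set"
  assumes "is_interval U" "bounded U" "t \<in> U" "t \<noteq> Inf U" "t \<noteq> Sup U"
  shows "t \<in> interior U"
proof -
  have bdd: "bdd_below U" "bdd_above U"
    using assms(2) by (auto simp: bounded_imp_bdd_below bounded_imp_bdd_above)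
  have "U \<noteq> {}" using assms(3) by blast
  have "Inf U < t" "t < Sup U"
    using cInf_lower[OF assms(3) bdd(1)] cSup_upper[OF assms(3) bdd(2)] assms(4,5) by auto
  obtain r where "r \<in> U" "r < t"
    using cInf_less_iff[OF \<open>U \<noteq> {}\<close> bdd(1)] \<open>Inf U < t\<close> by auto
  moreover obtain s where "s \<in> U" "t < s"
    using less_cSup_iff[OF \<open>U \<noteq> {}\<close> bdd(2)] \<open>t < Sup U\<close> by auto
  ultimately have "{r<..<s} \<subseteq> U"
    using mem_is_interval_1_I[OF assms(1)] by (meson greaterThanLessThan_iff less_imp_le subsetI)
  then show ?thesis
    using interior_maximal[of "{r<..<s}" U] \<open>r < t\<close> \<open>t < s\<close> by auto
qed

lemma indicator_interval_has_integral:
  assumes "is_interval (T :: real set)"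
  shows "(indicat_real T has_integral measure lebesgue (T \<inter> {a..b})) {a..b}"
proof -
  have "T \<inter> {a..b} \<in> lmeasurable"
    by (intro measurable_convex convex_Int is_interval_convex assms) auto
  then have "(indicat_real (T \<inter> {a..b}) has_integral measure lebesgue (T \<inter> {a..b})) UNIV"
    by (simp add: lmeasurable_iff_has_integral)
  moreover have "indicat_real (T \<inter> {a..b}) = (\<lambda>t. if t \<in> {a..b} then indicat_real T t else 0)"
    by (auto simp: indicator_def)
  ultimately show ?thesis
    using has_integral_restrict_UNIV[of "{a..b}" "indicat_real T"] by metis
qed

lemma sum_measure_interval_partition:
  fixes T :: "'i \<Rightarrow> real set"
  assumes fin: "finite I" and cover: "\<And>t. \<exists>l\<in>I. t \<in> T l" and disj: "disjoint_family_on T I"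
    and intv: "\<And>l. l \<in> I \<Longrightarrow> is_interval (T l)" and "a \<le> b"
  shows "(\<Sum>l\<in>I. measure lebesgue (T l \<inter> {a..b})) = b - a"
proof -
  have meas: "T l \<inter> {a..b} \<in> lmeasurable" if "l \<in> I" for l
    by (intro measurable_convex convex_Int is_interval_convex intv that) auto
  have "measure lebesgue (\<Union>l\<in>I. T l \<inter> {a..b}) = (\<Sum>l\<in>I. measure lebesgue (T l \<inter> {a..b}))"
  proof (rule measure_finite_Union[OF fin])
    show "(\<lambda>l. T l \<inter> {a..b}) ` I \<subseteq> sets lebesgue" using meas by blast
    show "disjoint_family_on (\<lambda>l. T l \<inter> {a..b}) I" using disj by (auto simp: disjoint_family_on_def)
    show "emeasure lebesgue (T l \<inter> {a..b}) \<noteq> \<infinity>" if "l \<in> I" for l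
      using fmeasurableD2[OF meas[OF that]] by simp
  qed
  moreover have "(\<Union>l\<in>I. T l \<inter> {a..b}) = {a..b}" using cover by blast
  ultimately show ?thesis using \<open>a \<le> b\<close> by simp
qed

text \<open>The derivative of the path is the step function with value v l on T l, except at the finitely
  many endpoints of the pieces inside [0, 1], so the fundamental theorem of calculus applies.\<close>
lemma piecewise_affine_path_increment:
  fixes g :: "real \<Rightarrow> 'a::banach"
  assumes fin: "finite I"
    and cover: "\<And>t. \<exists>l\<in>I. t \<in> T l"
    and disj: "disjoint_family_on T I"
    and intv: "\<And>l. l \<in> I \<Longrightarrow> is_interval (T l)"
    and cont: "continuous_on {0..1} g"
    and affine: "\<And>l t. l \<in> I \<Longrightarrow> t \<in> T l \<Longrightarrow> g t = c l + t *\<^sub>R v l"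
  shows "g 1 - g 0 = (\<Sum>l\<in>I. measure lebesgue (T l \<inter> {0..1}) *\<^sub>R v l)"
proof -
  define w where "w l = measure lebesgue (T l \<inter> {0..1})" for l
  have unique: "k = l" if "k \<in> I" "l \<in> I" "t \<in> T k" "t \<in> T l" for k l t
    using disj that unfolding disjoint_family_on_def by blast
  define h where "h t = (\<Sum>l\<in>I. indicator (T l) t *\<^sub>R v l)" for t
  have h_eq: "h t = v l" if "l \<in> I" "t \<in> T l" for l t
    unfolding h_def indicator_def
    by (rule sum_of_bool_scaleR_single[where P = "\<lambda>k. t \<in> T k", OF fin that]) (use unique that in blast)
  define S where "S = (\<Union>l\<in>I. {Inf (T l \<inter> {0..1}), Sup (T l \<inter> {0..1})})"
  have deriv: "(g has_vector_derivative h t) (at t)" if t: "t \<in> {0<..<1} - S" for t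
  proof -
    obtain l where l: "l \<in> I" "t \<in> T l" using cover by blast
    have "t \<in> interior (T l \<inter> {0..1})"
      using t l by (intro interval_mem_interior is_interval_Int intv) (auto simp: S_def)
    then have int: "t \<in> interior (T l)" by simp
    show ?thesis
    proof (rule has_vector_derivative_transform_within_open[OF _ open_interior int])
      show "((\<lambda>s. c l + s *\<^sub>R v l) has_vector_derivative h t) (at t)"
        using h_eq[OF l] by (auto intro!: derivative_eq_intros)
      show "c l + s *\<^sub>R v l = g s" if "s \<in> interior (T l)" for s
        using affine[OF l(1)] interior_subset that by (metis subsetD)
    qed
  qed
  have "(h has_integral (g 1 - g 0)) {0..1}"
    by (rule fundamental_theorem_of_calculus_interior_strong[where S = S, OF _ _ deriv cont])
      (auto simp: S_def fin)
  moreover have "(h has_integral (\<Sum>l\<in>I. w l *\<^sub>R v l)) {0..1}"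
    unfolding h_def w_def
    by (intro has_integral_sum[OF fin] has_integral_scaleR_left indicator_interval_has_integral intv)
  ultimately show ?thesis
    by (simp add: w_def has_integral_unique)
qed

lemma piecewise_affine_mean_value:
  fixes f :: "real^'n \<Rightarrow> real^'m" and \<Phi> :: "'i \<Rightarrow> real^'n^'m"
  assumes fin: "finite I" and cont: "continuous_on UNIV f"
    and cover: "\<And>x. \<exists>l\<in>I. x \<in> X l" and disj: "disjoint_family_on X I"
    and cvx: "\<And>l. l \<in> I \<Longrightarrow> convex (X l)"
    and affine: "\<And>l x. l \<in> I \<Longrightarrow> x \<in> X l \<Longrightarrow> f x = \<phi> l + \<Phi> l *v x"
  shows "\<exists>\<Psi> \<in> convex hull (\<Phi> ` I). f y - f x = \<Psi> *v (y - x)"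
proof -
  define d where "d = y - x"
  define T where "T l = {t. x + t *\<^sub>R d \<in> X l}" for l
  have T_cover: "\<exists>l\<in>I. t \<in> T l" for t
    using cover by (simp add: T_def)
  have T_disj: "disjoint_family_on T I"
    using disj by (auto simp: disjoint_family_on_def T_def)
  have T_interval: "is_interval (T l)" if "l \<in> I" for l
    unfolding T_def by (rule is_interval_line_preimage[OF cvx[OF that]])
  have path_cont: "continuous_on {0..1} (\<lambda>t. f (x + t *\<^sub>R d))"
    by (rule continuous_on_compose2[OF cont]) (auto intro!: continuous_intros)
  have path_affine: "f (x + t *\<^sub>R d) = (\<phi> l + \<Phi> l *v x) + t *\<^sub>R (\<Phi> l *v d)"
    if "l \<in> I" "t \<in> T l" for l t
    using affine that by (simp add: T_def matrix_vector_right_distrib matrix_vector_mult_scaleR add.assoc)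
  define w where "w l = measure lebesgue (T l \<inter> {0..1})" for l
  have increment: "f (x + 1 *\<^sub>R d) - f (x + 0 *\<^sub>R d) = (\<Sum>l\<in>I. w l *\<^sub>R (\<Phi> l *v d))"
    unfolding w_def
    by (rule piecewise_affine_path_increment[OF fin T_cover T_disj T_interval path_cont path_affine])
  have weights: "(\<Sum>l\<in>I. w l) = 1"
    using sum_measure_interval_partition[OF fin T_cover T_disj T_interval, of 0 1] by (simp add: w_def)
  define \<Psi> where "\<Psi> = (\<Sum>l\<in>I. w l *\<^sub>R \<Phi> l)"
  have "\<Psi> \<in> convex hull (\<Phi> ` I)"
    unfolding \<Psi>_def
    by (rule convex_sum[OF fin convex_convex_hull weights]) (auto simp: w_def intro: hull_inc)
  moreover have "f y - f x = \<Psi> *v (y - x)"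
    using increment by (simp add: d_def \<Psi>_def sum_matrix_vector_mult scaleR_matrix_vector_assoc)
  ultimately show ?thesis by blast
qed

section \<open>Inverse of a bijective piecewise affine map\<close>

lemma pw_affine_eq_on_piece:
  assumes "disjoint_family_on X {1..L}" "l \<in> {1..L}" "x \<in> X l"
  shows "pw_affine L X \<phi> \<Phi> x = \<phi> l + \<Phi> l *v x"
proof -
  have "x \<notin> X k" if "k \<in> {1..L}" "k \<noteq> l" for k
    using disjoint_family_onD[OF assms(1) that(1) assms(2) that(2)] assms(3) by blast
  then show ?thesis
    unfolding pw_affine_def using assms(2,3) by (intro sum_of_bool_scaleR_single) auto
qed

lemma inv_piecewise_affine:
  fixes f :: "real^'n \<Rightarrow> real^'n"
  assumes fin: "finite I" and bij: "bij f"
    and cover: "\<And>x. \<exists>l\<in>I. x \<in> X l" and disj: "disjoint_family_on X I"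
    and affine: "\<And>l x. l \<in> I \<Longrightarrow> x \<in> X l \<Longrightarrow> f x = \<phi> l + \<Phi> l *v x"
    and inv: "\<And>l. l \<in> I \<Longrightarrow> invertible (\<Phi> l)"
  shows "inv f y = (\<Sum>l\<in>I. of_bool (y \<in> f ` X l) *\<^sub>R (matrix_inv (\<Phi> l) *v (y - \<phi> l)))"
proof -
  define x where "x = inv f y"
  have fx: "f x = y" using bij by (simp add: x_def bij_is_surj surj_f_inv_f)
  obtain l where l: "l \<in> I" "x \<in> X l" using cover by blast
  have "y \<notin> f ` X k" if "k \<in> I" "k \<noteq> l" for k
  proof
    assume "y \<in> f ` X k"
    then obtain z where "z \<in> X k" "f z = f x" using fx by auto
    then have "x \<in> X k" using bij_is_inj[OF bij] by (simp add: inj_eq)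
    then show False using disj l that by (auto simp: disjoint_family_on_def)
  qed
  then have "(\<Sum>k\<in>I. of_bool (y \<in> f ` X k) *\<^sub>R (matrix_inv (\<Phi> k) *v (y - \<phi> k)))
      = matrix_inv (\<Phi> l) *v (y - \<phi> l)"
    using fx l by (intro sum_of_bool_scaleR_single[OF fin l(1)]) auto
  also have "\<dots> = x"
  proof -
    have "y = \<phi> l + \<Phi> l *v x" using fx affine[OF l] by simp
    then show ?thesis by (simp add: matrix_inv_mult_vector[OF inv[OF l(1)]])
  qed
  finally show ?thesis by (simp add: x_def)
qed

section \<open>Pieces bounded by parallel hyperplanes\<close>

lemma invertible_if_inj_affine_on_open:
  fixes A :: "real^'n^'n"
  assumes "inj f" "open U" "x \<in> U" "\<And>x. x \<in> U \<Longrightarrow> f x = c + A *v x"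
  shows "invertible A"
  unfolding invertible_left_inverse matrix_left_invertible_ker
proof (intro allI impI)
  fix v assume Av: "A *v v = 0"
  obtain e where "e > 0" "ball x e \<subseteq> U" using assms(2,3) open_contains_ball by blast
  have "0 < norm v + 1" using norm_ge_zero[of v] by linarith
  define s where "s = e / (norm v + 1)"
  have "s > 0" using \<open>e > 0\<close> \<open>0 < norm v + 1\<close> by (simp add: s_def)
  have "norm (s *\<^sub>R v) < e"
    using \<open>e > 0\<close> \<open>0 < norm v + 1\<close> by (simp add: s_def field_simps)
  then have "x + s *\<^sub>R v \<in> U"
    using \<open>ball x e \<subseteq> U\<close> by (auto simp: dist_norm)
  then have "f (x + s *\<^sub>R v) = f x"
    using assms(3,4) Av by (simp add: matrix_vector_right_distrib matrix_vector_mult_scaleR)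
  then show "v = 0"
    using assms(1) \<open>s > 0\<close> by (simp add: inj_eq)
qed

lemma hyperplane_subset_closure_slab:
  fixes a :: "'a::euclidean_space"
  assumes "a \<noteq> 0" "a \<bullet> x = t" "t < q"
  shows "x \<in> closure {z. t < a \<bullet> z \<and> a \<bullet> z < q}"
proof -
  define y where "y = x + ((q - t) / (2 * (a \<bullet> a))) *\<^sub>R a"
  have ay: "a \<bullet> y = (t + q) / 2"
    using assms by (simp add: y_def inner_add_right field_simps)
  then have "x \<noteq> y" using assms by auto
  have "open_segment x y \<subseteq> {z. t < a \<bullet> z \<and> a \<bullet> z < q}"
  proof
    fix z assume "z \<in> open_segment x y"
    then obtain u where "0 < u" "u < 1" "z = (1 - u) *\<^sub>R x + u *\<^sub>R y"
      by (auto simp: in_segment)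
    then have "a \<bullet> z = (1 - u) * t + u * ((t + q) / 2)"
      using assms(2) ay by (simp add: inner_add_right)
    then have "a \<bullet> z = t + u * (q - t) / 2"
      by (simp add: field_simps)
    moreover have "0 < u * (q - t)" "u * (q - t) < q - t"
      using \<open>0 < u\<close> \<open>u < 1\<close> assms(3) by simp_all
    ultimately show "z \<in> {z. t < a \<bullet> z \<and> a \<bullet> z < q}"
      by simp
  qed
  then have "closure (open_segment x y) \<subseteq> closure {z. t < a \<bullet> z \<and> a \<bullet> z < q}"
    by (rule closure_mono)
  moreover have "x \<in> closure (open_segment x y)"
    using \<open>x \<noteq> y\<close> by simp
  ultimately show ?thesis by blast
qed

lemma affine_agree_on_hyperplane_imp_outer:
  fixes A B :: "real^'n^'m" and a :: "real^'n"
  assumes "a \<noteq> 0" and agree: "\<And>x. a \<bullet> x = t \<Longrightarrow> \<phi> + A *v x = \<psi> + B *v x"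
  shows "\<exists>c. B = A + outer c a"
proof -
  define x0 where "x0 = (t / (a \<bullet> a)) *\<^sub>R a"
  have ax0: "a \<bullet> x0 = t" using assms(1) by (simp add: x0_def)
  have kernel: "(B - A) *v h = 0" if "a \<bullet> h = 0" for h
  proof -
    have "(\<phi> + A *v x0) + A *v h = (\<psi> + B *v x0) + B *v h"
      using agree[of "x0 + h"] ax0 that by (simp add: inner_add_right matrix_vector_right_distrib add_ac)
    then show ?thesis
      using agree[OF ax0] by (simp add: matrix_vector_mult_diff_rdistrib)
  qed
  define c where "c = (1 / (a \<bullet> a)) *\<^sub>R ((B - A) *v a)"
  have difference: "(B - A) *v z = (a \<bullet> z) *\<^sub>R c" for z
  proof -
    define h where "h = z - ((a \<bullet> z) / (a \<bullet> a)) *\<^sub>R a"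
    have "a \<bullet> h = 0" using assms(1) by (simp add: h_def inner_diff_right)
    moreover have "z = h + ((a \<bullet> z) / (a \<bullet> a)) *\<^sub>R a" by (simp add: h_def)
    ultimately have "(B - A) *v z = ((a \<bullet> z) / (a \<bullet> a)) *\<^sub>R ((B - A) *v a)"
      using kernel by (metis add_0 matrix_vector_right_distrib matrix_vector_mult_scaleR)
    then show ?thesis by (simp add: c_def)
  qed
  have "B *v z = (A + outer c a) *v z" for z
  proof -
    have "B *v z = A *v z + (B - A) *v z"
      by (simp add: matrix_vector_mult_diff_rdistrib)
    then show ?thesis
      by (simp only: difference[of z] matrix_vector_mult_add_rdistrib outer_mult_vector)
  qed
  then have "B = A + outer c a" unfolding matrix_eq by blast
  then show ?thesis by blast
qed

text \<open>If the factor were not positive, then for a point x0 on the hyperplane and small s > 0 the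
  point x0 + s a above the hyperplane and the point x0 + s A^-1 (A + c a^T) a below it would have
  the same image.\<close>
lemma inj_across_hyperplane_det_factor_pos:
  fixes f :: "real^'n \<Rightarrow> real^'n" and A :: "real^'n^'n"
  assumes "inj f" and inv: "invertible A" and "a \<noteq> 0" "p < t" "t < q"
    and below: "\<And>x. p < a \<bullet> x \<Longrightarrow> a \<bullet> x \<le> t \<Longrightarrow> f x = \<phi> + A *v x"
    and above: "\<And>x. t < a \<bullet> x \<Longrightarrow> a \<bullet> x < q \<Longrightarrow> f x = \<psi> + (A + outer c a) *v x"
    and boundary: "\<And>x. a \<bullet> x = t \<Longrightarrow> \<phi> + A *v x = \<psi> + (A + outer c a) *v x"
  shows "0 < 1 + a \<bullet> (matrix_inv A *v c)"
proof (rule ccontr)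
  define \<sigma> where "\<sigma> = 1 + a \<bullet> (matrix_inv A *v c)"
  assume "\<not> 0 < 1 + a \<bullet> (matrix_inv A *v c)"
  then have "\<sigma> \<le> 0" by (simp add: \<sigma>_def)
  have aa: "0 < a \<bullet> a" using \<open>a \<noteq> 0\<close> by simp
  obtain s where s: "0 < s" "s < (q - t) / (a \<bullet> a)" "s < (t - p) / ((1 - \<sigma>) * (a \<bullet> a))"
    using field_lbound_gt_zero[of "(q - t) / (a \<bullet> a)" "(t - p) / ((1 - \<sigma>) * (a \<bullet> a))"]
      aa \<open>\<sigma> \<le> 0\<close> \<open>p < t\<close> \<open>t < q\<close> by auto
  define x0 where "x0 = (t / (a \<bullet> a)) *\<^sub>R a"
  have ax0: "a \<bullet> x0 = t" using \<open>a \<noteq> 0\<close> by (simp add: x0_def)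
  define u where "u = a + (a \<bullet> a) *\<^sub>R (matrix_inv A *v c)"
  have Au: "A *v u = (A + outer c a) *v a"
    by (simp add: u_def matrix_vector_right_distrib matrix_vector_mult_add_rdistrib
        matrix_vector_mult_scaleR matrix_inv_mult_vector[OF inv])
  have au: "a \<bullet> u = \<sigma> * (a \<bullet> a)"
    by (simp add: u_def \<sigma>_def inner_add_right algebra_simps)
  define P where "P = x0 + s *\<^sub>R a"
  define Q where "Q = x0 + s *\<^sub>R u"
  have aP: "a \<bullet> P = t + s * (a \<bullet> a)" by (simp add: P_def inner_add_right ax0)
  have aQ: "a \<bullet> Q = t + s * (\<sigma> * (a \<bullet> a))" by (simp add: Q_def inner_add_right ax0 au)
  have "s * (a \<bullet> a) < q - t" using s(2) aa by (simp add: pos_less_divide_eq)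
  moreover have "s * ((1 - \<sigma>) * (a \<bullet> a)) < t - p"
    using s(3) aa \<open>\<sigma> \<le> 0\<close> by (simp add: pos_less_divide_eq)
  moreover have "s * (\<sigma> * (a \<bullet> a)) \<le> 0"
    using s(1) aa \<open>\<sigma> \<le> 0\<close> by (intro mult_nonneg_nonpos mult_nonpos_nonneg) auto
  ultimately have "t < a \<bullet> P" "a \<bullet> P < q" "p < a \<bullet> Q" "a \<bullet> Q \<le> t"
    using aP aQ mult_pos_pos[OF s(1) aa] by (auto simp: algebra_simps)
  then have "f P = f Q"
    using above below boundary[OF ax0]
    by (simp add: P_def Q_def matrix_vector_right_distrib matrix_vector_mult_scaleR Au add.assoc)
  then have "a \<bullet> P = a \<bullet> Q" using \<open>inj f\<close> by (simp add: inj_eq)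
  then have "\<sigma> = 1" using aP aQ s(1) aa by simp
  with \<open>\<sigma> \<le> 0\<close> show False by simp
qed

lemma ereal_affine_less_iff:
  "0 < r \<Longrightarrow> ereal r * x + ereal c < ereal r * y + ereal c \<longleftrightarrow> x < y"
  by (cases x; cases y) auto

lemma ereal_affine_le_iff:
  "0 < r \<Longrightarrow> ereal r * x + ereal c \<le> ereal r * y + ereal c \<longleftrightarrow> x \<le> y"
  by (cases x; cases y) auto

locale slab_piecewise_affine =
  fixes L :: nat and a :: "real^'n" and \<tau> :: "nat \<Rightarrow> ereal"
    and \<phi> :: "nat \<Rightarrow> real^'n" and \<Phi> :: "nat \<Rightarrow> real^'n^'n" and f :: "real^'n \<Rightarrow> real^'n"
  assumes a_nonzero: "a \<noteq> 0"
    and \<tau>_first: "\<tau> 0 = - \<infinity>" and \<tau>_last: "\<tau> L = \<infinity>"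
    and \<tau>_Suc: "\<And>l. l < L \<Longrightarrow> \<tau> l < \<tau> (Suc l)"
    and continuous: "continuous_on UNIV f" and bij: "bij f"
    and affine: "\<And>l x. l \<in> {1..L} \<Longrightarrow> \<tau> (l - 1) < ereal (a \<bullet> x) \<Longrightarrow> ereal (a \<bullet> x) \<le> \<tau> l \<Longrightarrow>
      f x = \<phi> l + \<Phi> l *v x"
begin

definition slab :: "nat \<Rightarrow> (real^'n) set"
  where "slab l = {x. \<tau> (l - 1) < ereal (a \<bullet> x) \<and> ereal (a \<bullet> x) \<le> \<tau> l}"

lemma \<tau>_less: "m < n \<Longrightarrow> n \<le> L \<Longrightarrow> \<tau> m < \<tau> n"
proof (induction n)
  case (Suc n)
  then show ?case using \<tau>_Suc[of n] by (cases "m = n") auto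
qed simp

lemma \<tau>_real:
  assumes "0 < l" "l < L"
  obtains t where "\<tau> l = ereal t"
  using \<tau>_less[of 0 l] \<tau>_less[of l L] assms \<tau>_first \<tau>_last by (cases "\<tau> l") auto

lemma L_pos: "1 \<le> L"
  using \<tau>_first \<tau>_last by (cases L) auto

lemma between_thresholds:
  assumes "l \<in> {1..L}"
  obtains p q where "\<tau> (l - 1) < ereal p" "p < q" "ereal q < \<tau> l"
proof -
  have "\<tau> (l - 1) < \<tau> l" using assms \<tau>_less[of "l - 1" l] by simp
  then obtain p where p: "\<tau> (l - 1) < ereal p" "ereal p < \<tau> l" using ereal_dense2 by blast
  then obtain q where "ereal p < ereal q" "ereal q < \<tau> l" using ereal_dense2 by blast
  with p that show ?thesis by simp
qed

lemma slab_cover: "\<exists>l\<in>{1..L}. x \<in> slab l"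
proof -
  define l where "l = (LEAST l. ereal (a \<bullet> x) \<le> \<tau> l)"
  have "ereal (a \<bullet> x) \<le> \<tau> L" using \<tau>_last by simp
  then have "l \<le> L" "ereal (a \<bullet> x) \<le> \<tau> l"
    unfolding l_def by (auto intro: Least_le LeastI)
  moreover have "l \<noteq> 0"
  proof
    assume "l = 0"
    with \<open>ereal (a \<bullet> x) \<le> \<tau> l\<close> \<tau>_first show False by simp
  qed
  moreover have "\<tau> (l - 1) < ereal (a \<bullet> x)"
    using not_less_Least[of "l - 1" "\<lambda>l. ereal (a \<bullet> x) \<le> \<tau> l"] \<open>l \<noteq> 0\<close> by (simp add: l_def)
  ultimately show ?thesis by (auto simp: slab_def)
qed

lemma slab_disjoint: "disjoint_family_on slab {1..L}"
proof -
  have "slab k \<inter> slab l = {}" if "k < l" "l \<le> L" for k l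
  proof -
    have False if "x \<in> slab k" "x \<in> slab l" for x
    proof -
      have "ereal (a \<bullet> x) \<le> \<tau> k" using that(1) by (simp add: slab_def)
      also have "\<tau> k \<le> \<tau> (l - 1)"
        using \<open>k < l\<close> \<open>l \<le> L\<close> by (cases "k = l - 1") (auto intro!: less_imp_le \<tau>_less)
      finally have "ereal (a \<bullet> x) \<le> \<tau> (l - 1)" .
      moreover have "\<tau> (l - 1) < ereal (a \<bullet> x)" using that(2) by (simp add: slab_def)
      ultimately show False by (blast dest: leD)
    qed
    then show ?thesis by blast
  qed
  then show ?thesis
    unfolding disjoint_family_on_def by (metis Int_commute atLeastAtMost_iff linorder_neqE_nat)
qed

lemma affine_on_slab: "l \<in> {1..L} \<Longrightarrow> x \<in> slab l \<Longrightarrow> f x = \<phi> l + \<Phi> l *v x"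
  by (simp add: slab_def affine)

lemma invertible_\<Phi>:
  assumes "l \<in> {1..L}"
  shows "invertible (\<Phi> l)"
proof -
  obtain p q where pq: "\<tau> (l - 1) < ereal p" "p < q" "ereal q < \<tau> l"
    using between_thresholds[OF assms] .
  define U where "U = {x. p < a \<bullet> x} \<inter> {x. a \<bullet> x < q}"
  have "open U" by (simp add: U_def open_Int open_halfspace_gt open_halfspace_lt)
  moreover have "((p + q) / 2 / (a \<bullet> a)) *\<^sub>R a \<in> U"
    using pq(2) a_nonzero by (simp add: U_def)
  moreover have "f x = \<phi> l + \<Phi> l *v x" if "x \<in> U" for x
  proof (rule affine[OF assms])
    have "ereal p < ereal (a \<bullet> x)" "ereal (a \<bullet> x) < ereal q" using that by (simp_all add: U_def)
    then show "\<tau> (l - 1) < ereal (a \<bullet> x)" "ereal (a \<bullet> x) \<le> \<tau> l"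
      using pq(1,3) by (meson order.strict_trans less_imp_le)+
  qed
  ultimately show ?thesis
    using invertible_if_inj_affine_on_open bij_is_inj[OF bij] by blast
qed

lemma boundary_agree:
  assumes "1 \<le> l" "l < L" "\<tau> l = ereal t" "a \<bullet> x = t"
  shows "\<phi> l + \<Phi> l *v x = \<phi> (Suc l) + \<Phi> (Suc l) *v x"
proof -
  obtain q where q: "\<tau> l < ereal q" "ereal q < \<tau> (Suc l)"
    using \<tau>_Suc[OF assms(2)] ereal_dense2 by blast
  have "t < q" using q(1) assms(3) by simp
  have "{z. t < a \<bullet> z \<and> a \<bullet> z < q} \<subseteq> {z. f z = \<phi> (Suc l) + \<Phi> (Suc l) *v z}"
  proof safe
    fix z assume "t < a \<bullet> z" "a \<bullet> z < q"
    then have "ereal (a \<bullet> z) < \<tau> (Suc l)"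
      using q(2) by (metis less_ereal.simps(1) order.strict_trans)
    then show "f z = \<phi> (Suc l) + \<Phi> (Suc l) *v z"
      using assms(1,2) \<open>t < a \<bullet> z\<close> by (intro affine) (auto simp: assms(3))
  qed
  moreover have "closed {z. f z = \<phi> (Suc l) + \<Phi> (Suc l) *v z}"
    by (intro closed_Collect_eq continuous) (auto intro!: continuous_intros)
  ultimately have "f x = \<phi> (Suc l) + \<Phi> (Suc l) *v x"
    using hyperplane_subset_closure_slab[OF a_nonzero assms(4) \<open>t < q\<close>] closure_minimal by blast
  moreover have "f x = \<phi> l + \<Phi> l *v x"
    using assms \<tau>_less[of "l - 1" l] by (intro affine) auto
  ultimately show ?thesis by simp
qed

lemma \<Phi>_Suc_eq:
  assumes "1 \<le> l" "l < L"
  shows "\<exists>c. \<Phi> (Suc l) = \<Phi> l + outer c a"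
proof -
  obtain t where t: "\<tau> l = ereal t" using \<tau>_real[of l] assms by auto
  show ?thesis
    by (rule affine_agree_on_hyperplane_imp_outer[OF a_nonzero boundary_agree[OF assms t]])
qed

lemma \<Phi>_eq_first:
  assumes "l \<in> {1..L}"
  shows "\<exists>c. \<Phi> l = \<Phi> 1 + outer c a"
proof -
  have "1 \<le> l" using assms by simp
  then show ?thesis
  proof (induction l rule: dec_induct)
    case base
    show ?case by (rule exI[of _ 0]) simp
  next
    case (step m)
    then obtain c d where "\<Phi> m = \<Phi> 1 + outer c a" "\<Phi> (Suc m) = \<Phi> m + outer d a"
      using \<Phi>_Suc_eq[of m] assms by auto
    then have "\<Phi> (Suc m) = \<Phi> 1 + outer (c + d) a" by (simp add: outer_add_left add.assoc)
    then show ?case by blast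
  qed
qed

lemma det_factor_pos:
  assumes "1 \<le> l" "l < L"
  shows "0 < det (\<Phi> (Suc l)) / det (\<Phi> l)"
proof -
  obtain c where c: "\<Phi> (Suc l) = \<Phi> l + outer c a" using \<Phi>_Suc_eq[OF assms] by blast
  obtain t where t: "\<tau> l = ereal t" using \<tau>_real[of l] assms by auto
  have "\<tau> (l - 1) < \<tau> l" using \<tau>_less[of "l - 1" l] assms by simp
  then obtain p where p: "\<tau> (l - 1) < ereal p" "ereal p < \<tau> l"
    using ereal_dense2 by blast
  obtain q where q: "\<tau> l < ereal q" "ereal q < \<tau> (Suc l)"
    using \<tau>_Suc[OF assms(2)] ereal_dense2 by blast
  have inv: "invertible (\<Phi> l)" using assms by (intro invertible_\<Phi>) auto
  have "0 < 1 + a \<bullet> (matrix_inv (\<Phi> l) *v c)"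
  proof (rule inj_across_hyperplane_det_factor_pos[OF bij_is_inj[OF bij] inv a_nonzero])
    show "p < t" "t < q" using p(2) q(1) t by simp_all
    show "f x = \<phi> l + \<Phi> l *v x" if "p < a \<bullet> x" "a \<bullet> x \<le> t" for x
      using that p(1) assms by (intro affine) (auto simp: t order.strict_trans)
    show "f x = \<phi> (Suc l) + (\<Phi> l + outer c a) *v x" if "t < a \<bullet> x" "a \<bullet> x < q" for x
    proof -
      have "ereal (a \<bullet> x) < \<tau> (Suc l)"
        using that(2) q(2) by (metis less_ereal.simps(1) order.strict_trans)
      then show ?thesis
        using that(1) assms unfolding c[symmetric] by (intro affine) (auto simp: t)
    qed
    show "\<phi> l + \<Phi> l *v x = \<phi> (Suc l) + (\<Phi> l + outer c a) *v x" if "a \<bullet> x = t" for x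
      using boundary_agree[OF assms t that] by (simp add: c)
  qed
  moreover have "det (\<Phi> (Suc l)) = det (\<Phi> l) * (1 + a \<bullet> (matrix_inv (\<Phi> l) *v c))"
    using det_add_outer[OF inv] by (simp add: c)
  moreover have "det (\<Phi> l) \<noteq> 0" using inv invertible_det_nz by blast
  ultimately show ?thesis by simp
qed

definition \<rho> :: "nat \<Rightarrow> real" where "\<rho> l = det (\<Phi> l) / det (\<Phi> 1)"

definition b :: "real^'n" where "b = a v* matrix_inv (\<Phi> 1)"

lemma det_first_nonzero: "det (\<Phi> 1) \<noteq> 0"
  using invertible_\<Phi>[of 1] L_pos invertible_det_nz by auto

lemma \<rho>_first: "\<rho> 1 = 1"
  using det_first_nonzero by (simp add: \<rho>_def)

lemma \<rho>_pos:
  assumes "l \<in> {1..L}"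
  shows "0 < \<rho> l"
proof -
  have "1 \<le> l" using assms by simp
  then show ?thesis
  proof (induction l rule: dec_induct)
    case base
    show ?case using \<rho>_first by (simp add: One_nat_def)
  next
    case (step m)
    then have "det (\<Phi> m) \<noteq> 0" using assms invertible_\<Phi>[of m] invertible_det_nz by auto
    then have "\<rho> (Suc m) = det (\<Phi> (Suc m)) / det (\<Phi> m) * \<rho> m" by (simp add: \<rho>_def)
    moreover have "0 < det (\<Phi> (Suc m)) / det (\<Phi> m)" using step assms by (intro det_factor_pos) auto
    ultimately show ?case using step by (simp only: mult_pos_pos)
  qed
qed

lemma b_\<Phi>:
  assumes "l \<in> {1..L}"
  shows "b \<bullet> (\<Phi> l *v z) = \<rho> l * (a \<bullet> z)"
proof -
  obtain c where c: "\<Phi> l = \<Phi> 1 + outer c a" using \<Phi>_eq_first[OF assms] by blast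
  have inv: "invertible (\<Phi> 1)" using invertible_\<Phi>[of 1] L_pos by simp
  have "\<rho> l = 1 + a \<bullet> (matrix_inv (\<Phi> 1) *v c)"
    using det_add_outer[OF inv] det_first_nonzero by (simp add: \<rho>_def c)
  then show ?thesis
    using inner_matrix_inv_add_outer[OF inv] by (simp add: b_def dot_lmul_matrix c)
qed

lemma b_f_on_slab: "l \<in> {1..L} \<Longrightarrow> x \<in> slab l \<Longrightarrow> b \<bullet> f x = b \<bullet> \<phi> l + \<rho> l * (a \<bullet> x)"
  by (simp add: affine_on_slab inner_add_right b_\<Phi>)

lemma boundary_offset:
  assumes "1 \<le> l" "l < L" "\<tau> l = ereal t"
  shows "\<rho> l * t + b \<bullet> \<phi> l = \<rho> (Suc l) * t + b \<bullet> \<phi> (Suc l)"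
proof -
  define x where "x = (t / (a \<bullet> a)) *\<^sub>R a"
  have ax: "a \<bullet> x = t" using a_nonzero by (simp add: x_def)
  have "b \<bullet> (\<phi> l + \<Phi> l *v x) = b \<bullet> (\<phi> (Suc l) + \<Phi> (Suc l) *v x)"
    using boundary_agree[OF assms ax] by simp
  then show ?thesis
    using assms by (simp add: inner_add_right b_\<Phi> ax)
qed

abbreviation \<nu> :: "nat \<Rightarrow> ereal" where "\<nu> \<equiv> nu_thr a \<tau> \<phi> \<Phi>"

lemma \<nu>_eq: "l \<in> {1..L} \<Longrightarrow> \<nu> l = ereal (\<rho> l) * \<tau> l + ereal (b \<bullet> \<phi> l)"
  by (simp add: nu_thr_def \<rho>_def b_def)

text \<open>By continuity across the boundary between consecutive slabs, the lower threshold of the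
  l-th image slab can be computed from the data of piece l itself.\<close>
lemma \<nu>_pred_eq:
  assumes "l \<in> {1..L}"
  shows "\<nu> (l - 1) = ereal (\<rho> l) * \<tau> (l - 1) + ereal (b \<bullet> \<phi> l)"
proof (cases "l = 1")
  case True
  then show ?thesis using \<rho>_pos[OF assms] by (simp add: nu_thr_def \<tau>_first)
next
  case False
  then have k: "1 \<le> l - 1" "l - 1 < L" "Suc (l - 1) = l" using assms by auto
  obtain t where t: "\<tau> (l - 1) = ereal t" using \<tau>_real[of "l - 1"] k by auto
  have "\<nu> (l - 1) = ereal (\<rho> (l - 1) * t + b \<bullet> \<phi> (l - 1))"
    using \<nu>_eq[of "l - 1"] k t by simp
  also have "\<dots> = ereal (\<rho> l * t + b \<bullet> \<phi> l)"
    using boundary_offset[OF k(1,2) t] k(3) by simp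
  finally show ?thesis unfolding t by simp
qed

lemma \<nu>_less:
  assumes "l \<in> {1..L}"
  shows "\<nu> (l - 1) < \<nu> l"
  unfolding \<nu>_pred_eq[OF assms] \<nu>_eq[OF assms]
  using \<tau>_less[of "l - 1" l] assms \<rho>_pos[OF assms] by (simp add: ereal_affine_less_iff)

lemma \<nu>_mono:
  assumes "j \<le> k" "k \<le> L"
  shows "\<nu> j \<le> \<nu> k"
  using assms
proof (induction k rule: dec_induct)
  case (step m)
  then show ?case using \<nu>_less[of "Suc m"] by simp
qed simp

definition image_slab :: "nat \<Rightarrow> (real^'n) set"
  where "image_slab l = {y. \<nu> (l - 1) < ereal (b \<bullet> y) \<and> ereal (b \<bullet> y) \<le> \<nu> l}"

lemma f_slab_subset:
  assumes "l \<in> {1..L}" "x \<in> slab l"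
  shows "f x \<in> image_slab l"
proof -
  have image: "ereal (b \<bullet> f x) = ereal (\<rho> l) * ereal (a \<bullet> x) + ereal (b \<bullet> \<phi> l)"
    by (simp add: b_f_on_slab[OF assms] add.commute)
  show ?thesis
    unfolding image_slab_def mem_Collect_eq image \<nu>_pred_eq[OF assms(1)] \<nu>_eq[OF assms(1)]
      ereal_affine_less_iff[OF \<rho>_pos[OF assms(1)]] ereal_affine_le_iff[OF \<rho>_pos[OF assms(1)]]
    using assms(2) by (simp add: slab_def)
qed

lemma image_slab_disjoint:
  assumes "k < l" "l \<le> L"
  shows "image_slab k \<inter> image_slab l = {}"
proof -
  have False if "y \<in> image_slab k" "y \<in> image_slab l" for y
  proof -
    have "ereal (b \<bullet> y) \<le> \<nu> k" using that(1) by (simp add: image_slab_def)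
    also have "\<nu> k \<le> \<nu> (l - 1)" using assms by (intro \<nu>_mono) auto
    finally have "ereal (b \<bullet> y) \<le> \<nu> (l - 1)" .
    moreover have "\<nu> (l - 1) < ereal (b \<bullet> y)" using that(2) by (simp add: image_slab_def)
    ultimately show False by (blast dest: leD)
  qed
  then show ?thesis by blast
qed

lemma image_slab_eq: "l \<in> {1..L} \<Longrightarrow> f ` slab l = image_slab l"
proof
  show "l \<in> {1..L} \<Longrightarrow> f ` slab l \<subseteq> image_slab l" using f_slab_subset by blast
  show "image_slab l \<subseteq> f ` slab l" if "l \<in> {1..L}"
  proof
    fix y assume y: "y \<in> image_slab l"
    obtain k where k: "k \<in> {1..L}" "inv f y \<in> slab k" using slab_cover by blast
    have fy: "f (inv f y) = y" using bij by (simp add: bij_is_surj surj_f_inv_f)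
    then have "y \<in> image_slab k" using f_slab_subset[OF k] by simp
    then have "k = l"
      using y image_slab_disjoint[of k l] image_slab_disjoint[of l k] k(1) that
      by (metis IntI atLeastAtMost_iff empty_iff linorder_neqE_nat)
    then show "y \<in> f ` slab l" using k(2) fy by (metis image_eqI)
  qed
qed

lemma inv_f_eq:
  "inv f y = (\<Sum>l\<in>{1..L}. of_bool (\<nu> (l - 1) < ereal (b \<bullet> y) \<and> ereal (b \<bullet> y) \<le> \<nu> l) *\<^sub>R
                             (matrix_inv (\<Phi> l) *v (y - \<phi> l)))"
proof -
  have "inv f y = (\<Sum>l\<in>{1..L}. of_bool (y \<in> f ` slab l) *\<^sub>R (matrix_inv (\<Phi> l) *v (y - \<phi> l)))"
    by (rule inv_piecewise_affine) (use bij slab_cover slab_disjoint affine_on_slab invertible_\<Phi> in auto)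
  also have "\<dots> = (\<Sum>l\<in>{1..L}. of_bool (\<nu> (l - 1) < ereal (b \<bullet> y) \<and> ereal (b \<bullet> y) \<le> \<nu> l) *\<^sub>R
                             (matrix_inv (\<Phi> l) *v (y - \<phi> l)))"
    by (rule sum.cong) (simp_all add: image_slab_eq image_slab_def)
  finally show ?thesis .
qed

end

theorem lemmaE2:
  fixes L :: nat
    and X :: "nat \<Rightarrow> (real^'p) set"
    and \<phi> :: "nat \<Rightarrow> real^'p"
    and \<Phi> :: "nat \<Rightarrow> real^'p^'p"
    and f :: "real^'p \<Rightarrow> real^'p"
  assumes cont: "continuous_on UNIV f"
    and f_def: "\<And>x. f x = pw_affine L X \<phi> \<Phi> x"
    and cover: "(\<Union>l\<in>{1..L}. X l) = UNIV"
    and disj: "disjoint_family_on X {1..L}"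
    and cvx: "\<And>l. l \<in> {1..L} \<Longrightarrow> convex (X l)"
  shows
    "(\<forall>x' x''. \<exists>\<Psi> \<in> convex hull (\<Phi> ` {1..L}). f x'' - f x' = \<Psi> *v (x'' - x'))
     \<and> (bij f \<longrightarrow> (\<forall>l\<in>{1..L}. invertible (\<Phi> l)) \<longrightarrow>
          (\<Union>l\<in>{1..L}. f ` X l) = UNIV
          \<and> disjoint_family_on (\<lambda>l. f ` X l) {1..L}
          \<and> (\<forall>y. inv f y = (\<Sum>l\<in>{1..L}. of_bool (y \<in> f ` X l) *\<^sub>R
                                           (matrix_inv (\<Phi> l) *v (y - \<phi> l)))))
     \<and> (\<forall>(a :: real^'p) (\<tau> :: nat \<Rightarrow> ereal).
          a \<noteq> 0 \<longrightarrow> \<tau> 0 = - \<infinity> \<longrightarrow> \<tau> L = \<infinity> \<longrightarrow> (\<forall>l<L. \<tau> l < \<tau> (Suc l)) \<longrightarrow>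
          (\<forall>l\<in>{1..L}. X l = {x. \<tau> (l - 1) < ereal (a \<bullet> x) \<and> ereal (a \<bullet> x) \<le> \<tau> l}) \<longrightarrow>
          bij f \<longrightarrow>
          (\<forall>y. inv f y = (\<Sum>l\<in>{1..L}.
                 of_bool (nu_thr a \<tau> \<phi> \<Phi> (l - 1) < ereal ((a v* matrix_inv (\<Phi> 1)) \<bullet> y)
                          \<and> ereal ((a v* matrix_inv (\<Phi> 1)) \<bullet> y) \<le> nu_thr a \<tau> \<phi> \<Phi> l)
                 *\<^sub>R (matrix_inv (\<Phi> l) *v (y - \<phi> l)))))"
proof -
  have cover_pt: "\<And>x. \<exists>l\<in>{1..L}. x \<in> X l" using cover by blast
  have on_piece: "\<And>l x. l \<in> {1..L} \<Longrightarrow> x \<in> X l \<Longrightarrow> f x = \<phi> l + \<Phi> l *v x"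
    by (simp add: f_def pw_affine_eq_on_piece[OF disj])
  show ?thesis
  proof (intro conjI allI impI, goal_cases)
    case (1 x' x'')
    show ?case
      by (rule piecewise_affine_mean_value[where X = X and \<phi> = \<phi>])
        (use cont cover_pt disj cvx on_piece in auto)
  next
    case 2
    then show ?case using cover bij_is_surj by (metis image_UN)
  next
    case 3
    show ?case
      using disjoint_family_on_vimageI[OF disj, of "inv f"]
      by (simp add: bij_vimage_eq_inv_image[OF bij_imp_bij_inv[OF 3(1)]] inv_inv_eq[OF 3(1)])
  next
    case (4 y)
    then show ?case
      by (intro inv_piecewise_affine[where X = X]) (use cover_pt disj on_piece in auto)
  next
    case (5 a \<tau> y)
    then interpret slab_piecewise_affine L a \<tau> \<phi> \<Phi> f
      using cont on_piece by unfold_locales auto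
    show ?case using inv_f_eq by (simp add: b_def)
  qed
qed

end
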